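(* Let $X\subset\mathbb{R}$ be a Lebesgue measurable set such that (i) for all $x\in\mathbb{R}$, $x\in X$ if and only if $x+1\in X$; and (ii) for every $k\in\mathbb{Z}$ and every $x\in X$, $kx\in X$. Then either $X$ has Lebesgue measure zero or $\mathbb{R}\setminus X$ has Lebesgue measure zero. *)

theory Defs
  imports "HOL-Analysis.Analysis"
begin

end

theory Submission
  imports Defs
begin

text \<open>Let c be the measure of X in [0,1). Periodicity gives every interval [j, j+1) the mass c.
  Doubling maps X \<inter> [j/2^n, (j+1)/2^n) into X \<inter> [j, j+1), so a dyadic interval of length 2^-n
  carries at most c/2^n; since its two halves add up to it, induction on n shows it carries exactly
  c/2^n. Approximating by dyadic intervals, X \<inter> I has measure c|I| for every interval I. If c = 0
  then X is null; otherwise Lebesgue measure restricted to X equals c times Lebesgue measure, and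
  evaluating both on the complement of X shows that the complement is null.\<close>

lemma lmeasurable_Int_atLeastLessThan:
  fixes X :: "real set"
  assumes "X \<in> sets lebesgue"
  shows "X \<inter> {a..<b} \<in> lmeasurable"
proof -
  have "{a..<b} \<in> lmeasurable"
    by (rule fmeasurableI2[of "{a..b}"]) auto
  then show ?thesis
    using fmeasurable_Int_fmeasurable assms by (metis Int_commute)
qed

lemma measure_Int_atLeastLessThan_split:
  fixes X :: "real set"
  assumes X: "X \<in> sets lebesgue" and "a \<le> b" "b \<le> d"
  shows "measure lebesgue (X \<inter> {a..<d}) =
    measure lebesgue (X \<inter> {a..<b}) + measure lebesgue (X \<inter> {b..<d})"
proof -
  have split: "X \<inter> {a..<d} = (X \<inter> {a..<b}) \<union> (X \<inter> {b..<d})"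
    using assms by auto
  show ?thesis
    unfolding split using lmeasurable_Int_atLeastLessThan[OF X]
    by (intro measure_Union) (auto simp: emeasure_eq_measure2 fmeasurableD)
qed

lemma sets_lebesgue_image_mult:
  fixes S :: "real set"
  assumes S: "S \<in> sets lebesgue" and "r \<noteq> 0"
  shows "(\<lambda>x. r * x) ` S \<in> sets lebesgue"
proof -
  have "(\<lambda>x. r * x) ` S = (\<lambda>x. (1 / r) *\<^sub>R x) -` S \<inter> space lebesgue"
    using \<open>r \<noteq> 0\<close> by (auto simp: image_iff intro!: bexI[where x="_ / r"])
  also have "\<dots> \<in> sets lebesgue"
    using S by measurable
  finally show ?thesis .
qed

lemma measure_Int_atLeastLessThan_divide_le:
  fixes X :: "real set"
  assumes X: "X \<in> sets lebesgue" and closed: "\<And>x. x \<in> X \<Longrightarrow> r * x \<in> X" and "r > 0"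
  shows "r * measure lebesgue (X \<inter> {a / r..<b / r}) \<le> measure lebesgue (X \<inter> {a..<b})"
proof -
  let ?S = "X \<inter> {a / r..<b / r}"
  have "r * measure lebesgue ?S = measure lebesgue ((\<lambda>x. r * x) ` ?S)"
    using measure_lebesgue_affine[of r 0 ?S] \<open>r > 0\<close> by simp
  also have "\<dots> \<le> measure lebesgue (X \<inter> {a..<b})"
  proof (rule measure_mono_fmeasurable)
    show "(\<lambda>x. r * x) ` ?S \<subseteq> X \<inter> {a..<b}"
      using closed \<open>r > 0\<close> by (auto simp: field_simps)
    show "(\<lambda>x. r * x) ` ?S \<in> sets lebesgue"
      using \<open>r > 0\<close>
      by (intro sets_lebesgue_image_mult fmeasurableD lmeasurable_Int_atLeastLessThan X) auto
  qed (rule lmeasurable_Int_atLeastLessThan[OF X])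
  finally show ?thesis .
qed

lemma eq_linear_if_eq_linear_on_dyadic_intervals:
  fixes F :: "real \<Rightarrow> real \<Rightarrow> real"
  assumes mono: "\<And>a b a' b'. a' \<le> a \<Longrightarrow> b \<le> b' \<Longrightarrow> F a b \<le> F a' b'"
    and nonneg: "\<And>a b. 0 \<le> F a b"
    and dyadic: "\<And>p q n. p \<le> q \<Longrightarrow>
      F (of_int p / 2^n) (of_int q / 2^n) = c * of_int (q - p) / 2^n"
    and "a \<le> b"
  shows "F a b = c * (b - a)"
proof -
  have "0 \<le> c"
    using dyadic[of 0 1 0] nonneg[of 0 1] by simp
  have approx: "\<bar>F a b - c * (b - a)\<bar> \<le> 2 * c / 2^n" for n :: nat
  proof -
    define N :: real where "N = 2^n"
    define P Q where "P = \<lfloor>a * N\<rfloor>" and "Q = \<lfloor>b * N\<rfloor>"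
    have "N > 0"
      unfolding N_def by simp
    have P: "of_int P \<le> a * N" "a * N < of_int P + 1"
      and Q: "of_int Q \<le> b * N" "b * N < of_int Q + 1"
      unfolding P_def Q_def by linarith+
    have "P \<le> Q"
      unfolding P_def Q_def using \<open>a \<le> b\<close> \<open>N > 0\<close> by (simp add: floor_mono)
    have "F a b \<le> F (of_int P / N) (of_int (Q + 1) / N)"
      using P Q \<open>N > 0\<close> by (intro mono) (simp_all add: field_simps)
    also have "\<dots> = c * of_int (Q + 1 - P) / N"
      using dyadic[of P "Q + 1" n] \<open>P \<le> Q\<close> unfolding N_def by simp
    also have "\<dots> \<le> c * ((b - a) * N + 2) / N"
      using P Q \<open>0 \<le> c\<close> \<open>N > 0\<close>
      by (intro divide_right_mono mult_left_mono) (simp_all add: left_diff_distrib)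
    also have "\<dots> = c * (b - a) + 2 * c / N"
      using \<open>N > 0\<close> by (simp add: field_simps)
    finally have upper: "F a b \<le> c * (b - a) + 2 * c / N" .
    have lower: "c * (b - a) - 2 * c / N \<le> F a b"
    proof (cases "P + 1 \<le> Q")
      case True
      have "c * (b - a) - 2 * c / N = c * ((b - a) * N - 2) / N"
        using \<open>N > 0\<close> by (simp add: field_simps)
      also have "\<dots> \<le> c * of_int (Q - (P + 1)) / N"
        using P Q \<open>0 \<le> c\<close> \<open>N > 0\<close>
      by (intro divide_right_mono mult_left_mono) (simp_all add: left_diff_distrib)
      also have "\<dots> = F (of_int (P + 1) / N) (of_int Q / N)"
        using dyadic[of "P + 1" Q n] True unfolding N_def by simp
      also have "\<dots> \<le> F a b"
        using P Q \<open>N > 0\<close> by (intro mono) (simp_all add: field_simps)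
      finally show ?thesis .
    next
      case False
      then have "(b - a) * N \<le> 2"
        using P Q by (simp add: left_diff_distrib)
      then have "c * (b - a) * N \<le> 2 * c"
        using \<open>0 \<le> c\<close> mult_left_mono[of "(b - a) * N" 2 c] by (simp add: ac_simps)
      then have "c * (b - a) - 2 * c / N \<le> 0"
        using \<open>N > 0\<close> by (simp add: field_simps)
      then show ?thesis
        using nonneg order_trans by blast
    qed
    show ?thesis
      using upper lower unfolding N_def by linarith
  qed
  have "\<bar>F a b - c * (b - a)\<bar> \<le> 0"
    by (rule LIMSEQ_le_const[OF LIMSEQ_divide_realpow_zero[of 2 "2 * c"]]) (use approx in auto)
  then show ?thesis
    by simp
qed

lemma lebesgue_null_or_conull_if_uniform_density:
  fixes X :: "real set"
  assumes X: "X \<in> sets lebesgue"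
    and uniform: "\<And>l u. l \<le> u \<Longrightarrow> emeasure lebesgue (X \<inter> {l<..<u}) = ennreal (c * (u - l))"
  shows "X \<in> null_sets lebesgue \<or> UNIV - X \<in> null_sets lebesgue"
proof (cases "c > 0")
  case False
  have "X \<inter> {- real n<..<real n} \<in> null_sets lebesgue" for n :: nat
    using uniform[of "- real n" "real n"] False X
    by (auto simp: null_sets_def ennreal_eq_0_iff mult_nonpos_nonneg)
  then have "(\<Union>n. X \<inter> {- real n<..<real n}) \<in> null_sets lebesgue"
    by blast
  moreover have "(\<Union>n. X \<inter> {- real n<..<real n}) = X"
  proof (intro equalityI subsetI)
    fix x
    assume "x \<in> X"
    moreover obtain n :: nat where "\<bar>x\<bar> < real n"
      using reals_Archimedean2 by blast
    ultimately show "x \<in> (\<Union>n. X \<inter> {- real n<..<real n})"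
      by (auto simp: abs_less_iff intro!: exI[of _ n])
  qed auto
  ultimately show ?thesis
    by simp
next
  case True
  \<comment> \<open>Lebesgue measure restricted to X and scaled by 1/c agrees with lborel on boxes, hence on all
    Borel sets; so Borel sets missing X are null.\<close>
  define M where "M = distr (density lebesgue (\<lambda>x. ennreal (1 / c) * indicator X x)) borel id"
  have emeasure_M: "emeasure M A = ennreal (1 / c) * emeasure lebesgue (X \<inter> A)"
    if "A \<in> sets borel" for A
  proof -
    have A: "A \<in> sets lebesgue"
      using that by simp
    have "emeasure M A = (\<integral>\<^sup>+x. ennreal (1 / c) * indicator (X \<inter> A) x \<partial>lebesgue)"
      unfolding M_def using that A X
      by (simp add: emeasure_distr emeasure_density id_borel_measurable_lebesgue
          indicator_inter_arith ac_simps)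
    also have "\<dots> = ennreal (1 / c) * emeasure lebesgue (X \<inter> A)"
      using A X by (simp add: nn_integral_cmult_indicator)
    finally show ?thesis .
  qed
  have lborel_eq: "lborel = M"
  proof (rule lborel_eqI)
    fix l u :: real
    assume "\<And>b. b \<in> Basis \<Longrightarrow> l \<bullet> b \<le> u \<bullet> b"
    then have "l \<le> u"
      by simp
    then show "emeasure M (box l u) = (\<Prod>b\<in>Basis. (u - l) \<bullet> b)"
      using True by (simp add: emeasure_M uniform ennreal_mult'[symmetric])
  qed (simp add: M_def)
  have null_outside: "S \<in> null_sets lebesgue" if "S \<in> sets borel" "S \<inter> X = {}" for S
  proof -
    have "emeasure lborel S = 0"
      using that by (simp add: lborel_eq emeasure_M Int_commute)
    then show ?thesis
      using that by (intro null_sets_completionI null_setsI) simp_all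
  qed
  have "UNIV - X \<in> sets lebesgue"
    using X by auto
  then obtain S N N' where "UNIV - X = S \<union> N" "N \<subseteq> N'" "N' \<in> null_sets lborel" "S \<in> sets lborel"
    by (rule sets_completionE)
  then have "UNIV - X \<subseteq> S \<union> N'" "S \<union> N' \<in> null_sets lebesgue"
    using null_outside[of S] by (auto intro: null_sets_completionI)
  then show ?thesis
    using null_sets_completion_subset by blast
qed

locale periodic_doubling_set =
  fixes X :: "real set"
  assumes lebesgue_measurable: "X \<in> sets lebesgue"
    and periodic: "\<And>x. x \<in> X \<longleftrightarrow> x + 1 \<in> X"
    and doubling: "\<And>x. x \<in> X \<Longrightarrow> 2 * x \<in> X"
begin

lemma add_of_int_mem_iff: "x + of_int j \<in> X \<longleftrightarrow> x \<in> X"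
proof (induction j arbitrary: x rule: int_induct[where k = 0])
  case (step1 i)
  then show ?case
    using periodic[of "x + of_int i"] by (simp add: add.assoc)
next
  case (step2 i)
  then show ?case
    using periodic[of "x + of_int (i - 1)"] by (simp add: add.assoc)
qed simp

lemma mult_two_power_mem: "x \<in> X \<Longrightarrow> 2 ^ n * x \<in> X"
  by (induction n) (use doubling in \<open>auto simp: mult.assoc\<close>)

lemma measure_Int_shift:
  "measure lebesgue (X \<inter> {a + of_int j..<b + of_int j}) = measure lebesgue (X \<inter> {a..<b})"
proof -
  have "X \<inter> {a + of_int j..<b + of_int j} = (+) (of_int j) ` (X \<inter> {a..<b})"
  proof (intro equalityI subsetI)
    fix y
    assume "y \<in> X \<inter> {a + of_int j..<b + of_int j}"
    then show "y \<in> (+) (of_int j) ` (X \<inter> {a..<b})"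
      using add_of_int_mem_iff[of "y - of_int j" j] by (auto intro!: image_eqI[of _ _ "y - of_int j"])
  qed (auto simp: add_of_int_mem_iff add.commute)
  then show ?thesis
    by (simp add: measure_translation)
qed

definition unit_mass :: real where
  "unit_mass = measure lebesgue (X \<inter> {0..<1})"

lemma measure_Int_dyadic_interval_le:
  "measure lebesgue (X \<inter> {of_int j / 2^n..<of_int (j + 1) / 2^n}) \<le> unit_mass / 2^n"
proof -
  have "2^n * measure lebesgue (X \<inter> {of_int j / 2^n..<of_int (j + 1) / 2^n})
      \<le> measure lebesgue (X \<inter> {of_int j..<of_int (j + 1)})"
    by (rule measure_Int_atLeastLessThan_divide_le)
      (simp_all add: lebesgue_measurable mult_two_power_mem)
  also have "\<dots> = unit_mass"
    using measure_Int_shift[of 0 j 1] by (simp add: unit_mass_def add.commute)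
  finally show ?thesis
    by (simp add: field_simps)
qed

text \<open>Each half of a dyadic interval carries at most half of its mass (by doubling), so both
  carry exactly half.\<close>
lemma measure_Int_dyadic_interval:
  "measure lebesgue (X \<inter> {of_int j / 2^n..<of_int (j + 1) / 2^n}) = unit_mass / 2^n"
proof (induction n arbitrary: j)
  case 0
  show ?case
    using measure_Int_shift[of 0 j 1] by (simp add: unit_mass_def add.commute)
next
  case (Suc n)
  define p where "p = j div 2"
  let ?\<mu> = "\<lambda>i. measure lebesgue (X \<inter> {of_int i / 2 ^ Suc n..<of_int (i + 1) / 2 ^ Suc n})"
  have parent: "of_int (2 * p) / 2 ^ Suc n = (of_int p / 2^n :: real)"
    "of_int (2 * p + 1 + 1) / 2 ^ Suc n = (of_int (p + 1) / 2^n :: real)"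
    by (simp_all add: field_simps)
  have "?\<mu> (2 * p) + ?\<mu> (2 * p + 1) =
      measure lebesgue (X \<inter> {of_int p / 2^n..<of_int (p + 1) / 2^n})"
    unfolding parent[symmetric]
    by (rule measure_Int_atLeastLessThan_split[symmetric, OF lebesgue_measurable])
      (simp_all add: field_simps)
  also have "\<dots> = 2 * (unit_mass / 2 ^ Suc n)"
    using Suc.IH by simp
  finally have "?\<mu> (2 * p) = unit_mass / 2 ^ Suc n \<and> ?\<mu> (2 * p + 1) = unit_mass / 2 ^ Suc n"
    using measure_Int_dyadic_interval_le[of "2 * p" "Suc n"]
      measure_Int_dyadic_interval_le[of "2 * p + 1" "Suc n"]
    by linarith
  moreover have "j = 2 * p \<or> j = 2 * p + 1"
    unfolding p_def by presburger
  ultimately show ?case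
    by auto
qed

lemma measure_Int_dyadic_atLeastLessThan:
  assumes "p \<le> q"
  shows "measure lebesgue (X \<inter> {of_int p / 2^n..<of_int q / 2^n}) =
    unit_mass * of_int (q - p) / 2^n"
  using assms
proof (induction q rule: int_ge_induct)
  case (step q)
  have "measure lebesgue (X \<inter> {of_int p / 2^n..<of_int (q + 1) / 2^n}) =
      measure lebesgue (X \<inter> {of_int p / 2^n..<of_int q / 2^n}) +
      measure lebesgue (X \<inter> {of_int q / 2^n..<of_int (q + 1) / 2^n})"
    using step.hyps
    by (intro measure_Int_atLeastLessThan_split lebesgue_measurable) (simp_all add: divide_right_mono)
  then show ?case
    using step.IH measure_Int_dyadic_interval[of q n] by (simp add: field_simps)
qed simp

lemma measure_Int_atLeastLessThan:
  "a \<le> b \<Longrightarrow> measure lebesgue (X \<inter> {a..<b}) = unit_mass * (b - a)"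
  by (rule eq_linear_if_eq_linear_on_dyadic_intervals)
    (auto intro!: measure_mono_fmeasurable lmeasurable_Int_atLeastLessThan lebesgue_measurable
      simp: measure_Int_dyadic_atLeastLessThan)

lemma emeasure_Int_greaterThanLessThan:
  assumes "l \<le> u"
  shows "emeasure lebesgue (X \<inter> {l<..<u}) = ennreal (unit_mass * (u - l))"
proof -
  have "X \<inter> {l<..<u} = X \<inter> {l..<u} - {l}"
    by auto
  moreover have "{l} \<in> null_sets lebesgue"
    by simp
  ultimately have "emeasure lebesgue (X \<inter> {l<..<u}) = emeasure lebesgue (X \<inter> {l..<u})"
    using lmeasurable_Int_atLeastLessThan[OF lebesgue_measurable]
    by (simp add: emeasure_Diff_null_set fmeasurableD)
  then show ?thesis
    using lmeasurable_Int_atLeastLessThan[OF lebesgue_measurable] measure_Int_atLeastLessThan[OF assms]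
    by (simp add: emeasure_eq_measure2)
qed

end

theorem lemma2:
  fixes X :: "real set"
  assumes "X \<in> sets lebesgue"
    and "\<And>x. x \<in> X \<longleftrightarrow> x + 1 \<in> X"
    and "\<And>(k::int) x. x \<in> X \<Longrightarrow> of_int k * x \<in> X"
  shows "emeasure lebesgue X = 0 \<or> emeasure lebesgue (UNIV - X) = 0"
proof -
  interpret periodic_doubling_set X
    using assms(1,2) assms(3)[of _ 2] by unfold_locales simp_all
  have "X \<in> null_sets lebesgue \<or> UNIV - X \<in> null_sets lebesgue"
    by (rule lebesgue_null_or_conull_if_uniform_density
        [OF lebesgue_measurable emeasure_Int_greaterThanLessThan])
  then show ?thesis
    by auto
qed

end
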